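(* Let $q\in\mathrm{prob}(\{0,1\}^2)$. The set $D:=\{(\pi_1,\chi^{(1)}_{1|1}):(\pi,\chi)\in\Theta_2,\ \mu(\pi,\chi)=q\}$ is nonempty and equals the set of all $(\mathrm{Pr},\mathrm{Se}_1)\in[0,1]^2$ satisfying $\mathrm{Pr}-q_{0+}\le\mathrm{Pr}\,\mathrm{Se}_1\le q_{1+}$.
   Context: A subscript $+$ denotes summation over the replaced index: $q_{0+}=q_{00}+q_{01}$, $q_{1+}=q_{10}+q_{11}$. $\mathrm{prob}(\mathcal{X})$ is the set of probability densities on a finite set $\mathcal{X}$; $\mathrm{markov}(\mathcal{X},\mathcal{Y})$ the set of maps $(x,y)\mapsto p_{y|x}$ with $p_{\cdot|x}\in\mathrm{prob}(\mathcal{Y})$. $\Theta_2:=\mathrm{prob}(\{0,1\})\times\mathrm{markov}(\{0,1\},\{0,1\}^2)$, $\mu(\pi,\chi)_j:=\sum_{i=0}^1\pi_i\chi_{j|i}$ for $j\in\{0,1\}^2$, $\chi^{(1)}_{\iota|i}:=\chi_{\iota0|i}+\chi_{\iota1|i}$. *)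

theory Defs
  imports Main Complex_Main
begin

definition prob_dens :: "'a set \<Rightarrow> ('a \<Rightarrow> real) \<Rightarrow> bool" where
  "prob_dens X p \<longleftrightarrow> (\<forall>x\<in>X. 0 \<le> p x) \<and> (\<Sum>x\<in>X. p x) = 1"

text \<open>markov(X,Y): maps (x,y) to p_{y|x}, written chi x y, with chi x in prob(Y) for x in X.\<close>
definition markov :: "'a set \<Rightarrow> 'b set \<Rightarrow> ('a \<Rightarrow> 'b \<Rightarrow> real) \<Rightarrow> bool" where
  "markov X Y chi \<longleftrightarrow> (\<forall>x\<in>X. prob_dens Y (chi x))"

abbreviation B01 :: "nat set" where "B01 \<equiv> {0, 1}"

definition Theta2 :: "((nat \<Rightarrow> real) \<times> (nat \<Rightarrow> nat \<times> nat \<Rightarrow> real)) set" where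
  "Theta2 = {(pr, chi). prob_dens B01 pr \<and> markov B01 (B01 \<times> B01) chi}"

definition mu :: "(nat \<Rightarrow> real) \<Rightarrow> (nat \<Rightarrow> nat \<times> nat \<Rightarrow> real) \<Rightarrow> nat \<times> nat \<Rightarrow> real" where
  "mu pr chi j = (\<Sum>i\<in>B01. pr i * chi i j)"

text \<open>chi1 chi iota i = chi^{(1)}_{iota|i} = chi_{iota 0|i} + chi_{iota 1|i}\<close>
definition chi1 :: "(nat \<Rightarrow> nat \<times> nat \<Rightarrow> real) \<Rightarrow> nat \<Rightarrow> nat \<Rightarrow> real" where
  "chi1 chi iota i = chi i (iota, 0) + chi i (iota, 1)"

end

theory Submission
  imports Defs
begin

text \<open>
  Summing the equations mu(pi, chi) = q over the second coordinate gives
  pi_0 T + pi_1 S = q_1+ with T = chi1_{1|0} and S = chi1_{1|1} in [0,1]. Bounding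
  pi_0 T between 0 and pi_0 = 1 - pi_1 yields both inequalities. Conversely, the
  inequalities are exactly what is needed to find T in [0,1] completing this convex
  combination; a kernel with the resulting first-coordinate marginals, multiplied by
  the conditional density of the second coordinate of q given the first, reproduces q.
\<close>

lemma sum_B01_times_B01:
  "(\<Sum>j\<in>B01 \<times> B01. f j) = f (0,0) + f (0,1) + f (1,0) + (f (1,1) :: real)"
  by (simp add: sum.cartesian_product[symmetric])

lemma prob_dens_B01_iff:
  "prob_dens B01 p \<longleftrightarrow> 0 \<le> p 0 \<and> 0 \<le> p 1 \<and> p 0 + p 1 = 1"
  by (auto simp: prob_dens_def)

lemma prob_dens_B01_times_B01_iff:
  "prob_dens (B01 \<times> B01) p \<longleftrightarrow>
     0 \<le> p (0,0) \<and> 0 \<le> p (0,1) \<and> 0 \<le> p (1,0) \<and> 0 \<le> p (1,1) \<and>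
     p (0,0) + p (0,1) + p (1,0) + p (1,1) = 1"
  by (auto simp: prob_dens_def sum_B01_times_B01)

definition bin_dens :: "real \<Rightarrow> nat \<Rightarrow> real" where
  "bin_dens s k = (if k = 1 then s else 1 - s)"

lemma prob_dens_bin_dens: "s \<in> {0..1} \<Longrightarrow> prob_dens B01 (bin_dens s)"
  unfolding prob_dens_B01_iff bin_dens_def by simp

lemma markov_prod_kernel:
  assumes "finite X" "finite Y" "markov I X r" "markov X Y w"
  shows "markov I (X \<times> Y) (\<lambda>i (x, y). r i x * w x y)"
  unfolding markov_def prob_dens_def
proof (intro ballI conjI)
  fix i assume i: "i \<in> I"
  show "0 \<le> (case j of (x, y) \<Rightarrow> r i x * w x y)" if "j \<in> X \<times> Y" for j
    using that i assms(3,4) by (auto simp: markov_def prob_dens_def)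
  have "(\<Sum>(x, y)\<in>X \<times> Y. r i x * w x y) = (\<Sum>x\<in>X. r i x * (\<Sum>y\<in>Y. w x y))"
    by (simp add: sum.cartesian_product[symmetric] sum_distrib_left)
  also have "\<dots> = (\<Sum>x\<in>X. r i x)"
    using assms(4) by (auto simp: markov_def prob_dens_def intro: sum.cong)
  also have "\<dots> = 1"
    using i assms(3) by (simp add: markov_def prob_dens_def)
  finally show "(\<Sum>j\<in>X \<times> Y. case j of (x, y) \<Rightarrow> r i x * w x y) = 1" .
qed

lemma mu_prod_kernel:
  "mu pr (\<lambda>i (x, y). r i x * w x y) (x, y) = (\<Sum>i\<in>B01. pr i * r i x) * w x y"
  by (simp add: mu_def algebra_simps)

lemma chi1_prod_kernel:
  "prob_dens B01 (w k) \<Longrightarrow> chi1 (\<lambda>i (x, y). r i x * w x y) k i = r i k"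
  unfolding prob_dens_B01_iff chi1_def by (simp flip: distrib_left)

definition cond_dens :: "'b set \<Rightarrow> ('a \<times> 'b \<Rightarrow> real) \<Rightarrow> 'a \<Rightarrow> 'b \<Rightarrow> real" where
  "cond_dens Y q x y =
     (let m = (\<Sum>y'\<in>Y. q (x, y')) in if m = 0 then 1 / card Y else q (x, y) / m)"

lemma prob_dens_cond_dens:
  assumes "finite Y" "Y \<noteq> {}" "\<forall>y\<in>Y. 0 \<le> q (x, y)"
  shows "prob_dens Y (cond_dens Y q x)"
proof (cases "(\<Sum>y\<in>Y. q (x, y)) = 0")
  case True
  with assms(1,2) show ?thesis
    by (simp add: prob_dens_def cond_dens_def)
next
  case False
  moreover have "0 \<le> (\<Sum>y\<in>Y. q (x, y))"
    using assms(3) by (simp add: sum_nonneg)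
  ultimately show ?thesis
    using assms(3) by (simp add: prob_dens_def cond_dens_def sum_divide_distrib[symmetric])
qed

lemma marginal_mult_cond_dens:
  assumes "finite Y" "\<forall>y\<in>Y. 0 \<le> q (x, y)" "y \<in> Y"
  shows "(\<Sum>y'\<in>Y. q (x, y')) * cond_dens Y q x y = q (x, y)"
proof (cases "(\<Sum>y'\<in>Y. q (x, y')) = 0")
  case True
  then have "q (x, y) = 0"
    using assms sum_nonneg_eq_0_iff[of Y "\<lambda>y'. q (x, y')"] by auto
  with True show ?thesis by simp
qed (simp add: cond_dens_def)

lemma chi1_bounds:
  assumes "prob_dens (B01 \<times> B01) (chi i)" "k \<in> B01"
  shows "chi1 chi k i \<in> {0..1}"
  using assms unfolding prob_dens_B01_times_B01_iff chi1_def by auto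

lemma mu_marginal:
  "mu pr chi (k, 0) + mu pr chi (k, 1) = pr 0 * chi1 chi k 0 + pr 1 * chi1 chi k 1"
  by (simp add: mu_def chi1_def algebra_simps)

lemma convex_comb_bounds:
  fixes p s t a b :: real
  assumes "p \<in> {0..1}" "t \<in> {0..1}" "(1 - p) * t + p * s = b" "a + b = 1"
  shows "p - a \<le> p * s \<and> p * s \<le> b"
proof -
  have "0 \<le> (1 - p) * t" "(1 - p) * t \<le> 1 - p"
    using assms(1,2) by (auto intro: mult_left_le)
  with assms(3,4) show ?thesis by linarith
qed

lemma convex_comb_exists:
  fixes p s a b :: real
  assumes "p \<in> {0..1}" "p - a \<le> p * s" "p * s \<le> b" "a + b = 1"
  shows "\<exists>t\<in>{0..1}. (1 - p) * t + p * s = b"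
proof (cases "p = 1")
  case True
  with assms show ?thesis by (intro bexI[of _ 0]) auto
next
  case False
  with assms show ?thesis
    by (intro bexI[of _ "(b - p * s) / (1 - p)"]) (auto simp: divide_le_eq)
qed

lemma parameters_imp_bounds:
  assumes q: "prob_dens (B01 \<times> B01) q"
    and "(pr, chi) \<in> Theta2" and fit: "\<forall>j\<in>B01 \<times> B01. mu pr chi j = q j"
  shows "pr 1 \<in> {0..1} \<and> chi1 chi 1 1 \<in> {0..1} \<and>
         pr 1 - (q (0,0) + q (0,1)) \<le> pr 1 * chi1 chi 1 1 \<and>
         pr 1 * chi1 chi 1 1 \<le> q (1,0) + q (1,1)"
proof -
  have "prob_dens B01 pr" and chi: "\<And>i. i \<in> B01 \<Longrightarrow> prob_dens (B01 \<times> B01) (chi i)"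
    using \<open>(pr, chi) \<in> Theta2\<close> by (auto simp: Theta2_def markov_def)
  then have pr: "0 \<le> pr 0" "0 \<le> pr 1" "pr 0 + pr 1 = 1"
    unfolding prob_dens_B01_iff by auto
  have "pr 1 \<in> {0..1}"
    using pr by auto
  moreover have "(1 - pr 1) * chi1 chi 1 0 + pr 1 * chi1 chi 1 1 = q (1,0) + q (1,1)"
    using mu_marginal[of pr chi 1] fit pr(3) by (simp add: eq_diff_eq)
  moreover have "(q (0,0) + q (0,1)) + (q (1,0) + q (1,1)) = 1"
    using q unfolding prob_dens_B01_times_B01_iff by simp
  moreover have "chi1 chi 1 0 \<in> {0..1}" "chi1 chi 1 1 \<in> {0..1}"
    using chi1_bounds[OF chi] by auto
  ultimately show ?thesis
    using convex_comb_bounds by blast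
qed

lemma bounds_imp_parameters:
  assumes q: "prob_dens (B01 \<times> B01) q"
    and P: "P \<in> {0..1}" and S: "S \<in> {0..1}"
    and "P - (q (0,0) + q (0,1)) \<le> P * S" "P * S \<le> q (1,0) + q (1,1)"
  shows "\<exists>pr chi. (pr, chi) \<in> Theta2 \<and> (\<forall>j\<in>B01 \<times> B01. mu pr chi j = q j) \<and>
                 pr 1 = P \<and> chi1 chi 1 1 = S"
proof -
  have q': "0 \<le> q (0,0)" "0 \<le> q (0,1)" "0 \<le> q (1,0)" "0 \<le> q (1,1)"
    "q (0,0) + q (0,1) + q (1,0) + q (1,1) = 1"
    using q unfolding prob_dens_B01_times_B01_iff by auto
  then have q_nonneg: "\<forall>l\<in>B01. 0 \<le> q (k, l)" if "k \<in> B01" for k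
    using that by auto
  obtain t where t: "t \<in> {0..1}" and b: "(1 - P) * t + P * S = q (1,0) + q (1,1)"
    using convex_comb_exists[OF P assms(4,5)] q'(5) by auto
  define pr where "pr = bin_dens P"
  define r where "r = (\<lambda>i::nat. bin_dens (if i = 1 then S else t))"
  define w where "w = cond_dens B01 q"
  define chi where "chi = (\<lambda>i (k, l). r i k * w k l)"
  have w: "markov B01 B01 w"
    unfolding markov_def w_def using q_nonneg by (auto intro: prob_dens_cond_dens)
  have "markov B01 B01 r"
    unfolding markov_def r_def using S t by (intro ballI prob_dens_bin_dens) auto
  then have "(pr, chi) \<in> Theta2"
    unfolding Theta2_def chi_def pr_def using P w
    by (intro CollectI case_prodI conjI prob_dens_bin_dens markov_prod_kernel) auto
  moreover have "mu pr chi (k, l) = q (k, l)" if "k \<in> B01" "l \<in> B01" for k l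
  proof -
    have "(\<Sum>i\<in>B01. pr i * r i k) = (\<Sum>l'\<in>B01. q (k, l'))"
      using that b q'(5) by (auto simp: pr_def r_def bin_dens_def algebra_simps)
    then show ?thesis
      using marginal_mult_cond_dens[OF _ q_nonneg[OF that(1)] that(2)]
      by (simp add: chi_def mu_prod_kernel w_def)
  qed
  moreover have "chi1 chi 1 1 = S"
    using w by (simp add: chi_def markov_def chi1_prod_kernel r_def bin_dens_def)
  ultimately show ?thesis
    by (intro exI[of _ pr] exI[of _ chi]) (auto simp: pr_def bin_dens_def)
qed

theorem lemma6:
  fixes q :: "nat \<times> nat \<Rightarrow> real"
  assumes "prob_dens (B01 \<times> B01) q"
  defines "D \<equiv> {(pr 1, chi1 chi 1 1) | pr chi.
                  (pr, chi) \<in> Theta2 \<and> (\<forall>j\<in>B01 \<times> B01. mu pr chi j = q j)}"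
  shows "D \<noteq> {} \<and>
         D = {(Pr, Se1). Pr \<in> {0..1} \<and> Se1 \<in> {0..1} \<and>
                Pr - (q (0,0) + q (0,1)) \<le> Pr * Se1 \<and> Pr * Se1 \<le> q (1,0) + q (1,1)}"
    (is "_ \<and> D = ?R")
proof -
  have D_eq: "D = ?R"
  proof (intro set_eqI iffI)
    show "x \<in> ?R" if "x \<in> D" for x
      using that parameters_imp_bounds[OF assms(1)] unfolding D_def by auto
    show "x \<in> D" if "x \<in> ?R" for x
      using that bounds_imp_parameters[OF assms(1)] unfolding D_def by fastforce
  qed
  have "(q (1,0) + q (1,1), 1) \<in> ?R"
    using assms(1) unfolding prob_dens_B01_times_B01_iff by simp
  with D_eq show ?thesis by blast
qed

end
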